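(* Let $T$ be a binary phylogenetic $X$-tree with $|X|\geq 4$ containing a cherry $[v,w]$. Let $e_v, e_w$ be the edges incident to the leaves $v$ and $w$, let $z'$ be the common neighbor of $v$ and $w$, let $z$ be the unique neighbor of $z'$ other than $v,w$ (a non-leaf vertex), and let $E_z$ be the set of the three edges incident with $z$. Let $x,y\notin X$ be distinct new labels. For $i=1,2$ let $e_i \in E(T)\setminus\{e_v,e_w\}$ and let $T_i$ be the binary phylogenetic $(X\cup\{x,y\})$-tree obtained from $T$ by attaching cherry $[x,y]$ to $e_i$; let $T_i^2$ be the binary phylogenetic $((X\setminus\{v,w\})\cup\{x,y\})$-tree obtained from $T_i$ by a cherry reduction of type 2 using $[v,w]$. Then $T_1^2 \cong T_2^2$ if and only if ($e_1=e_2$ or $e_1,e_2\in E_z$).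
   Context: A phylogenetic $X$-tree is a tree with no vertices of degree 2 whose leaves are bijectively labelled by (and identified with) $X$; binary means maximum degree 3; $\cong$ denotes isomorphism of graphs fixing all leaf labels. A cherry $[v,w]$ is a pair of leaves adjacent to the same vertex. Attaching cherry $[x,y]$ to an edge $e=\{p,q\}$: subdivide $e$ by a new vertex $u$ (replacing $e$ by $\{p,u\},\{u,q\}$), add a new vertex $c$ with edge $\{u,c\}$, and add new leaves $x,y$ with edges $\{c,x\},\{c,y\}$. Cherry reduction of type 2 using a cherry $[v,w]$ with common neighbor $z'$: delete $v$, $w$ and $z'$ (with incident edges), then suppress the resulting degree-2 vertex (replace it and its two incident edges by a single edge). *)

theory Defs
  imports Main
begin

text \<open>Finite simple undirected graphs given by a vertex set V and a set E of
  2-element edges. Leaves are identified with their labels (elements of 'a).\<close>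

definition simple_graph :: "'a set \<Rightarrow> 'a set set \<Rightarrow> bool" where
  "simple_graph V E \<longleftrightarrow> finite V \<and> (\<forall>e\<in>E. \<exists>a b. e = {a, b} \<and> a \<in> V \<and> b \<in> V \<and> a \<noteq> b)"

definition degree :: "'a set set \<Rightarrow> 'a \<Rightarrow> nat" where
  "degree E v = card {e\<in>E. v \<in> e}"

definition neighbors :: "'a set set \<Rightarrow> 'a \<Rightarrow> 'a set" where
  "neighbors E v = {u. {v, u} \<in> E \<and> u \<noteq> v}"

definition connected_graph :: "'a set \<Rightarrow> 'a set set \<Rightarrow> bool" where
  "connected_graph V E \<longleftrightarrow>
     (\<forall>a\<in>V. \<forall>b\<in>V. (a, b) \<in> {(p, q). {p, q} \<in> E}\<^sup>*)"

definition acyclic_graph :: "'a set set \<Rightarrow> bool" where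
  "acyclic_graph E \<longleftrightarrow>
     \<not> (\<exists>cs. length cs \<ge> 3 \<and> distinct cs \<and>
            (\<forall>i < length cs. {cs ! i, cs ! ((i + 1) mod length cs)} \<in> E))"

definition is_tree :: "'a set \<Rightarrow> 'a set set \<Rightarrow> bool" where
  "is_tree V E \<longleftrightarrow> simple_graph V E \<and> V \<noteq> {} \<and> connected_graph V E \<and> acyclic_graph E"

definition leaves :: "'a set \<Rightarrow> 'a set set \<Rightarrow> 'a set" where
  "leaves V E = {v\<in>V. degree E v \<le> 1}"

definition phylo_tree :: "'a set \<Rightarrow> 'a set \<Rightarrow> 'a set set \<Rightarrow> bool" where
  "phylo_tree X V E \<longleftrightarrow> is_tree V E \<and> leaves V E = X \<and> (\<forall>v\<in>V. degree E v \<noteq> 2)"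

definition binary_phylo_tree :: "'a set \<Rightarrow> 'a set \<Rightarrow> 'a set set \<Rightarrow> bool" where
  "binary_phylo_tree X V E \<longleftrightarrow> phylo_tree X V E \<and> (\<forall>v\<in>V. degree E v \<le> 3)"

definition tree_iso :: "'a set \<Rightarrow> 'a set \<Rightarrow> 'a set set \<Rightarrow> 'a set \<Rightarrow> 'a set set \<Rightarrow> bool" where
  "tree_iso L V1 E1 V2 E2 \<longleftrightarrow>
     (\<exists>f. bij_betw f V1 V2 \<and>
          (\<forall>a\<in>V1. \<forall>b\<in>V1. {a, b} \<in> E1 \<longleftrightarrow> {f a, f b} \<in> E2) \<and>
          (\<forall>l\<in>L. f l = l))"

text \<open>Attaching cherry [x,y] to edge e, with fresh subdivision vertex u and
  fresh cherry parent c.\<close>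
definition attach_cherry_V :: "'a set \<Rightarrow> 'a \<Rightarrow> 'a \<Rightarrow> 'a \<Rightarrow> 'a \<Rightarrow> 'a set" where
  "attach_cherry_V V u c x y = V \<union> {u, c, x, y}"

definition attach_cherry_E :: "'a set set \<Rightarrow> 'a set \<Rightarrow> 'a \<Rightarrow> 'a \<Rightarrow> 'a \<Rightarrow> 'a \<Rightarrow> 'a set set" where
  "attach_cherry_E E e u c x y =
     (E - {e}) \<union> {{p, u} | p. p \<in> e} \<union> {{u, c}, {c, x}, {c, y}}"

text \<open>Cherry reduction of type 2 using the cherry [v,w] of (V,E), producing (V',E'):
  delete v, w and their common neighbour z' (with incident edges), then suppress the
  resulting degree-2 vertex s (the third neighbour of z') with neighbours a, b.\<close>
definition cherry_reduction2 ::
  "'a set \<Rightarrow> 'a set set \<Rightarrow> 'a \<Rightarrow> 'a \<Rightarrow> 'a set \<Rightarrow> 'a set set \<Rightarrow> bool" where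
  "cherry_reduction2 V E v w V' E' \<longleftrightarrow>
     (\<exists>z' s a b.
        v \<noteq> w \<and> v \<in> leaves V E \<and> w \<in> leaves V E \<and>
        {v, z'} \<in> E \<and> {w, z'} \<in> E \<and> {z', s} \<in> E \<and> s \<notin> {v, w} \<and>
        (let V0 = V - {v, w, z'}; E0 = {e\<in>E. e \<inter> {v, w, z'} = {}} in
          s \<in> V0 \<and> degree E0 s = 2 \<and> neighbors E0 s = {a, b} \<and> a \<noteq> b \<and>
          V' = V0 - {s} \<and> E' = (E0 - {{a, s}, {s, b}}) \<union> {{a, b}}))"

end

theory Submission
  imports Defs "HOL-Library.Transitive_Closure_Table"
begin

text \<open>After the cherry reduction, T_i^2 is the tree T' (T without v, w, z' and with z suppressed)
  with the cherry [x, y] attached to the edge red(e_i), where red(e) = {q1, q2} for the three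
  edges e at z (q1, q2 being the neighbours of z other than z') and red(e) = e otherwise. Cherries attached to the same edge give isomorphic trees.
  Conversely, a leaf-fixing isomorphism maps the parent of the cherry and the vertex it hangs from
  onto their counterparts, hence the two attachment edges separate the leaves of T' in the same
  way; but in a tree without degree-2 vertices, two distinct edges always separate some pair of
  leaves differently.\<close>

section \<open>Edge sets and reachability\<close>

text \<open>Instances of the following, for the vertex set, decide equations between old and fresh
  vertices as conditional simp rules; simp does not flip negated equations, hence both forms.\<close>
lemma neq_if_mem_not_mem: "p \<in> A \<Longrightarrow> q \<notin> A \<Longrightarrow> p \<noteq> q" "p \<notin> A \<Longrightarrow> q \<in> A \<Longrightarrow> p \<noteq> q"
  by auto

lemma Un_Diff_Un_if_disjoint: "A \<inter> D = {} \<Longrightarrow> (A \<union> R) - D \<union> N = A \<union> (R - D \<union> N)"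
  by auto

lemma Setcompr_pair: "{{p, u} |p. p \<in> {a, b}} = {{a, u}, {b, u}}"
  by auto

definition graph_on :: "'a set \<Rightarrow> 'a set set \<Rightarrow> bool" where
  "graph_on W H \<longleftrightarrow> (\<forall>e\<in>H. \<exists>p q. e = {p, q} \<and> p \<in> W \<and> q \<in> W \<and> p \<noteq> q)"

definition adj :: "'a set set \<Rightarrow> ('a \<times> 'a) set" where
  "adj F = {(p, q). {p, q} \<in> F}"

definition reach :: "'a set set \<Rightarrow> 'a \<Rightarrow> 'a set" where
  "reach F s = {t. (s, t) \<in> (adj F)\<^sup>*}"

definition forest :: "'a set set \<Rightarrow> bool" where
  "forest F \<longleftrightarrow> (\<forall>a b. {a, b} \<in> F \<longrightarrow> b \<notin> reach (F - {{a, b}}) a)"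

lemma simple_graph_iff: "simple_graph V E \<longleftrightarrow> finite V \<and> graph_on V E"
  unfolding simple_graph_def graph_on_def by blast

lemma graph_on_Diff: "graph_on W H \<Longrightarrow> graph_on W (H - F)"
  unfolding graph_on_def by blast

lemma graph_on_edge_subset:
  assumes "graph_on W H" "e \<in> H"
  shows "e \<subseteq> W"
proof -
  obtain p q where "e = {p, q}" "p \<in> W" "q \<in> W" using assms unfolding graph_on_def by blast
  then show ?thesis by simp
qed

lemma graph_onD: "graph_on W H \<Longrightarrow> {p, q} \<in> H \<Longrightarrow> p \<in> W \<and> q \<in> W \<and> p \<noteq> q"
  unfolding graph_on_def by (metis doubleton_eq_iff)

lemma graph_on_finite: "finite W \<Longrightarrow> graph_on W H \<Longrightarrow> finite H"
  unfolding graph_on_def by (auto intro: finite_subset[of H "Pow W"])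

lemma graph_on_edge_containing:
  assumes "graph_on W H" "e \<in> H" "t \<in> e"
  obtains u where "e = {t, u}" "u \<noteq> t"
proof -
  obtain p q where "e = {p, q}" "p \<noteq> q" using assms(1,2) unfolding graph_on_def by blast
  then show thesis using that assms(3) by (cases "t = p") (auto simp: insert_commute)
qed

lemma neighbors_iff: "graph_on W H \<Longrightarrow> u \<in> neighbors H t \<longleftrightarrow> {t, u} \<in> H"
  unfolding neighbors_def by (auto dest: graph_onD)

lemma neighbors_subset: "graph_on W H \<Longrightarrow> neighbors H t \<subseteq> W"
  unfolding neighbors_def by (auto dest: graph_onD)

lemma neighbors_Un_avoiding: "\<forall>g\<in>K'. s \<notin> g \<Longrightarrow> neighbors (K' \<union> N) s = neighbors N s"
  unfolding neighbors_def by auto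

lemma card_le_1_member_eq: "finite N \<Longrightarrow> card N \<le> 1 \<Longrightarrow> a \<in> N \<Longrightarrow> N = {a}"
  using card_le_Suc0_iff_eq[of N] by auto

lemma degree_eq_card_neighbors:
  assumes "graph_on W H"
  shows "degree H t = card (neighbors H t)"
proof -
  have "e \<in> (\<lambda>u. {t, u}) ` neighbors H t" if e: "e \<in> H" "t \<in> e" for e
  proof -
    obtain u where "e = {t, u}" "u \<noteq> t" using graph_on_edge_containing[OF assms e] .
    then show ?thesis using e(1) neighbors_iff[OF assms] by blast
  qed
  then have "{e\<in>H. t \<in> e} = (\<lambda>u. {t, u}) ` neighbors H t"
    using neighbors_iff[OF assms] by blast
  moreover have "inj_on (\<lambda>u. {t, u}) (neighbors H t)"
    unfolding inj_on_def neighbors_def by (metis doubleton_eq_iff)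
  ultimately show ?thesis unfolding degree_def by (simp add: card_image)
qed

lemma degree_le_1_unique_edge:
  assumes "finite F" "degree F t \<le> 1" "A \<in> F" "B \<in> F" "t \<in> A" "t \<in> B"
  shows "A = B"
proof (rule ccontr)
  assume "A \<noteq> B"
  then have "card {A, B} = 2" by simp
  moreover have "card {A, B} \<le> card {e\<in>F. t \<in> e}"
    using assms by (intro card_mono) auto
  ultimately show False using assms(2) unfolding degree_def by simp
qed

lemma adj_iff [simp]: "(p, q) \<in> adj F \<longleftrightarrow> {p, q} \<in> F"
  by (simp add: adj_def)

lemma reach_refl [simp]: "s \<in> reach F s"
  by (simp add: reach_def)

lemma reach_step: "y \<in> reach F s \<Longrightarrow> {y, t} \<in> F \<Longrightarrow> t \<in> reach F s"
  by (auto simp: reach_def intro: rtrancl_into_rtrancl)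

lemma reach_edge: "{s, t} \<in> F \<Longrightarrow> t \<in> reach F s"
  using reach_step[OF reach_refl] .

lemma reach_trans: "y \<in> reach F s \<Longrightarrow> t \<in> reach F y \<Longrightarrow> t \<in> reach F s"
  by (auto simp: reach_def intro: rtrancl_trans)

lemma reach_sym: "y \<in> reach F s \<Longrightarrow> s \<in> reach F y"
proof -
  have "(t, s) \<in> (adj F)\<^sup>*" if "(s, t) \<in> (adj F)\<^sup>*" for s t
    using that
  proof induction
    case (step y t)
    then have "(t, y) \<in> adj F" by (simp add: insert_commute)
    then show ?case using step(3) by (rule converse_rtrancl_into_rtrancl)
  qed simp
  then show "y \<in> reach F s \<Longrightarrow> s \<in> reach F y" by (simp add: reach_def)
qed

lemma reach_map:
  assumes "t \<in> reach F s" "\<And>p q. {p, q} \<in> F \<Longrightarrow> g q \<in> reach G (g p)"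
  shows "g t \<in> reach G (g s)"
proof -
  have "(s, t) \<in> (adj F)\<^sup>*" using assms(1) by (simp add: reach_def)
  then show ?thesis
  proof induction
    case (step y t)
    then have "{y, t} \<in> F" by simp
    then show ?case using reach_trans[OF step.IH assms(2)] by blast
  qed simp
qed

lemma reach_mono: "F \<subseteq> G \<Longrightarrow> y \<in> reach F s \<Longrightarrow> y \<in> reach G s"
proof -
  assume "F \<subseteq> G"
  then have "adj F \<subseteq> adj G" by (auto simp: adj_def)
  then show "y \<in> reach F s \<Longrightarrow> y \<in> reach G s" unfolding reach_def using rtrancl_mono by blast
qed

lemma reach_subset:
  assumes "graph_on W F" "s \<in> W"
  shows "reach F s \<subseteq> W"
proof
  fix t assume "t \<in> reach F s"
  then have "(s, t) \<in> (adj F)\<^sup>*" by (simp add: reach_def)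
  then show "t \<in> W" by induction (use assms in \<open>auto dest: graph_onD\<close>)
qed

lemma reach_isolated: "(\<And>t. {s, t} \<notin> F) \<Longrightarrow> reach F s = {s}"
proof -
  assume iso: "\<And>t. {s, t} \<notin> F"
  have "t = s" if "(s, t) \<in> (adj F)\<^sup>*" for t
    using that by induction (use iso in auto)
  then show ?thesis by (auto simp: reach_def)
qed

lemma reach_remove_edge_cases:
  assumes "y \<in> reach F a" "{a, b} \<in> F"
  shows "y \<in> reach (F - {{a, b}}) a \<or> y \<in> reach (F - {{a, b}}) b"
proof -
  have "(a, y) \<in> (adj F)\<^sup>*" using assms(1) by (simp add: reach_def)
  then show ?thesis
  proof induction
    case (step y t)
    then show ?case
      by (cases "{y, t} = {a, b}") (auto simp: doubleton_eq_iff intro: reach_step)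
  qed simp
qed

lemma reach_remove_other_edge:
  assumes "p \<in> e'" "p \<notin> reach (F - {e}) s" "s \<in> reach (F - {e'}) r"
  shows "reach (F - {e}) s \<subseteq> reach (F - {e'}) r"
proof
  fix t assume "t \<in> reach (F - {e}) s"
  then have "(s, t) \<in> (adj (F - {e}))\<^sup>*" by (simp add: reach_def)
  then show "t \<in> reach (F - {e'}) r"
  proof induction
    case (step y t)
    then have "{y, t} \<noteq> e'"
      using assms(1,2) by (auto simp: reach_def intro: rtrancl_into_rtrancl)
    with step show ?case by (auto intro: reach_step)
  qed (use assms(3) in simp)
qed

section \<open>Forests\<close>

lemma acyclic_graph_imp_forest:
  assumes "graph_on V E" "acyclic_graph E"
  shows "forest E"
  unfolding forest_def
proof (intro allI impI notI)
  fix a b assume ab: "{a, b} \<in> E" and "b \<in> reach (E - {{a, b}}) a"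
  let ?r = "\<lambda>p q. (p, q) \<in> adj (E - {{a, b}})"
  have "?r\<^sup>*\<^sup>* a b" using \<open>b \<in> reach _ a\<close> by (simp add: reach_def rtrancl_def)
  then obtain xs where "rtrancl_path ?r a xs b" by (metis rtranclp_eq_rtrancl_path)
  then obtain ys where P: "rtrancl_path ?r a ys b" and D: "distinct (a # ys)"
    using rtrancl_path_distinct by metis
  have "a \<noteq> b" using graph_onD[OF assms(1) ab] by simp
  then have ne: "ys \<noteq> []" using P by (auto elim: rtrancl_path.cases)
  have lst: "last ys = b" using rtrancl_path_last[OF P ne] .
  have "length ys \<noteq> 1"
  proof
    assume "length ys = 1"
    then have "ys = [b]" using lst by (cases ys) auto
    then show False using rtrancl_path_nth[OF P, of 0] by simp
  qed
  with ne have L: "length (a # ys) \<ge> 3" by (cases ys) (auto simp: Suc_le_eq)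
  have "{(a # ys) ! i, (a # ys) ! ((i + 1) mod length (a # ys))} \<in> E"
    if i: "i < length (a # ys)" for i
  proof (cases "i < length ys")
    case True
    then show ?thesis using rtrancl_path_nth[OF P True] by simp
  next
    case False
    then have "i = length ys" using i by simp
    then show ?thesis using lst ne ab by (simp add: last_conv_nth insert_commute)
  qed
  then show False using assms(2) D L unfolding acyclic_graph_def by blast
qed

lemma forest_sides_disjoint:
  assumes "forest H" "{a, b} \<in> H"
  shows "reach (H - {{a, b}}) a \<inter> reach (H - {{a, b}}) b = {}"
proof -
  have "b \<notin> reach (H - {{a, b}}) a" using assms unfolding forest_def by blast
  moreover have "b \<in> reach (H - {{a, b}}) a"
    if "y \<in> reach (H - {{a, b}}) a" "y \<in> reach (H - {{a, b}}) b" for y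
    using reach_trans[OF that(1) reach_sym[OF that(2)]] .
  ultimately show ?thesis by blast
qed

lemma forest_endpoint_notin_side:
  "forest H \<Longrightarrow> {a, b} \<in> H \<Longrightarrow> a \<notin> reach (H - {{a, b}}) b"
  using forest_sides_disjoint[of H a b] reach_refl[of a] by blast

lemma forest_branch_subset_side:
  assumes "forest H" "{b, t} \<in> H" "{t, t'} \<in> H" "t' \<noteq> b"
  shows "reach (H - {{t, t'}}) t' \<subseteq> reach (H - {{b, t}}) t"
proof (rule reach_remove_other_edge)
  show "t \<notin> reach (H - {{t, t'}}) t'" using forest_endpoint_notin_side assms(1,3) .
  have "{t, t'} \<noteq> {b, t}" using assms(4) by (auto simp: doubleton_eq_iff)
  then show "t' \<in> reach (H - {{b, t}}) t" using assms(3) by (simp add: reach_edge)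
qed simp

lemma forest_side_has_leaf:
  assumes "finite W" "graph_on W H" "forest H" "{b, t} \<in> H"
  obtains l where "l \<in> reach (H - {{b, t}}) t" "degree H l \<le> 1"
  using assms(4)
proof (induction "card (reach (H - {{b, t}}) t)" arbitrary: b t thesis rule: less_induct)
  case less
  show thesis
  proof (cases "degree H t \<le> 1")
    case True then show thesis by (rule less.prems(1)[OF reach_refl])
  next
    case False
    have "card {e\<in>H. t \<in> e} > card {{b, t}}" using False unfolding degree_def by simp
    then have "\<not> {e\<in>H. t \<in> e} \<subseteq> {{b, t}}" by (meson card_mono finite.emptyI finite.insertI leD)
    then obtain e where e: "e \<in> H" "t \<in> e" "e \<noteq> {b, t}" by blast
    obtain t' where t': "e = {t, t'}" "t' \<noteq> t" using graph_on_edge_containing[OF assms(2) e(1,2)] .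
    have et: "{t, t'} \<in> H" "t' \<noteq> b" using e t' by (auto simp: insert_commute)
    have sub: "reach (H - {{t, t'}}) t' \<subseteq> reach (H - {{b, t}}) t"
      using forest_branch_subset_side[OF assms(3) less.prems(2) et] .
    moreover have "t \<notin> reach (H - {{t, t'}}) t'"
      using forest_endpoint_notin_side[OF assms(3) et(1)] .
    ultimately have psub: "reach (H - {{t, t'}}) t' \<subset> reach (H - {{b, t}}) t"
      using reach_refl[of t] by blast
    have "t \<in> W" using graph_onD[OF assms(2) less.prems(2)] by simp
    then have "finite (reach (H - {{b, t}}) t)"
      using reach_subset[OF graph_on_Diff[OF assms(2)]] assms(1) finite_subset by blast
    then have "card (reach (H - {{t, t'}}) t') < card (reach (H - {{b, t}}) t)"
      using psub by (rule psubset_card_mono)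
    then obtain l where "l \<in> reach (H - {{t, t'}}) t'" "degree H l \<le> 1"
      using less.hyps et(1) by blast
    then show thesis using less.prems(1) sub by blast
  qed
qed

lemma forest_branches_disjoint:
  assumes "forest H" "{b, t1} \<in> H" "{b, t2} \<in> H" "t1 \<noteq> t2"
  shows "reach (H - {{b, t1}}) t1 \<inter> reach (H - {{b, t2}}) t2 = {}"
proof -
  have "{b, t2} \<noteq> {b, t1}" using assms(4) by (auto simp: doubleton_eq_iff)
  then have "t2 \<in> reach (H - {{b, t1}}) b" using assms(3) by (simp add: reach_edge)
  moreover have "b \<notin> reach (H - {{b, t2}}) t2" using forest_endpoint_notin_side[OF assms(1,3)] .
  ultimately have "reach (H - {{b, t2}}) t2 \<subseteq> reach (H - {{b, t1}}) b"
    by (intro reach_remove_other_edge[of b]) auto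
  then show ?thesis using forest_sides_disjoint[OF assms(1,2)] by blast
qed

lemma forest_branch_avoiding:
  assumes "graph_on W H" "forest H" "{a, b} \<in> H" "degree H b \<ge> 3"
  obtains t where "{b, t} \<in> H" "t \<noteq> a" "p \<notin> reach (H - {{b, t}}) t"
proof -
  have "card (neighbors H b) \<ge> 3" using assms(4) degree_eq_card_neighbors[OF assms(1)] by simp
  then have "card (neighbors H b - {a}) \<ge> 2"
    using card_Diff_singleton_if[of "neighbors H b" a] by (auto split: if_splits)
  then obtain t1 t2 where t: "t1 \<in> neighbors H b - {a}" "t2 \<in> neighbors H b - {a}" "t1 \<noteq> t2"
    by (metis card.infinite card_le_Suc0_iff_eq not_less_eq_eq numeral_2_eq_2 zero_le)
  then have e: "{b, t1} \<in> H" "{b, t2} \<in> H" using neighbors_iff[OF assms(1)] by auto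
  have "p \<notin> reach (H - {{b, t1}}) t1 \<or> p \<notin> reach (H - {{b, t2}}) t2"
    using forest_branches_disjoint[OF assms(2) e t(3)] by blast
  then show thesis using that e t by blast
qed

lemma edge_on_one_side:
  assumes "graph_on W H" "\<forall>p\<in>W. \<forall>q\<in>W. q \<in> reach H p" "h \<in> H" "h' \<in> H" "h \<noteq> h'"
  obtains a b where "h = {a, b}" "h' \<subseteq> reach (H - {h}) b"
proof -
  obtain a b where ab: "h = {a, b}" "a \<in> W" using assms(1,3) unfolding graph_on_def by blast
  obtain p q where pq: "h' = {p, q}" "p \<in> W" using assms(1,4) unfolding graph_on_def by blast
  have q: "q \<in> reach (H - {h}) p" using assms(4,5) pq(1) by (simp add: reach_edge)
  have "h' \<subseteq> reach (H - {h}) s" if "p \<in> reach (H - {h}) s" for s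
    using reach_trans[OF that q] that pq(1) by simp
  moreover have "p \<in> reach (H - {h}) a \<or> p \<in> reach (H - {h}) b"
    using reach_remove_edge_cases[of p H a b] assms(2,3) ab pq(2) by simp
  moreover have "h = {b, a}" using ab(1) by (simp add: insert_commute)
  ultimately show thesis using that ab(1) by metis
qed

lemma degree_ge_3_if_side_nontrivial:
  assumes W: "finite W" "graph_on W H" and no_deg2: "\<forall>t\<in>W. degree H t \<noteq> 2"
    and ab: "{a, b} \<in> H" and p: "p \<in> reach (H - {{a, b}}) b" "p \<noteq> b"
  shows "degree H b \<ge> 3"
proof -
  have "degree H b \<noteq> 0" "b \<in> W"
    using ab graph_on_finite[OF W] graph_onD[OF W(2) ab] unfolding degree_def by auto
  moreover have "\<not> degree H b \<le> 1"
  proof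
    assume "degree H b \<le> 1"
    then have "{b, t} \<notin> H - {{a, b}}" for t
      using degree_le_1_unique_edge[OF graph_on_finite[OF W], of b "{a, b}" "{b, t}"] ab by auto
    then have "reach (H - {{a, b}}) b = {b}" by (rule reach_isolated)
    then show False using p by simp
  qed
  ultimately show ?thesis using no_deg2 by fastforce
qed

text \<open>With h1 = {a, b}, h2 = {a', b'}, h2 on the b side of h1 and h1 on the a' side of h2:
  a leaf l1 beyond b' and a leaf l2 behind a third edge at b (which exists as b has degree 3, and
  can be chosen to avoid b') are separated by h2 but not by h1.\<close>
lemma forest_separating_leaves:
  assumes W: "finite W" "graph_on W H" and forest: "forest H"
    and no_deg2: "\<forall>t\<in>W. degree H t \<noteq> 2" and conn: "\<forall>p\<in>W. \<forall>q\<in>W. q \<in> reach H p"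
    and h: "h1 \<in> H" "h2 \<in> H" "h1 \<noteq> h2"
  obtains l1 l2 where "l1 \<in> W" "degree H l1 \<le> 1" "l2 \<in> W" "degree H l2 \<le> 1"
    "l2 \<in> reach (H - {h1}) l1" "l2 \<notin> reach (H - {h2}) l1"
proof -
  obtain a b where h1: "h1 = {a, b}" "h2 \<subseteq> reach (H - {h1}) b"
    using edge_on_one_side[OF W(2) conn h] .
  obtain b' a' where h2: "h2 = {b', a'}" "h1 \<subseteq> reach (H - {h2}) a'"
    using edge_on_one_side[OF W(2) conn h(2,1) h(3)[symmetric]] .
  have a'b': "{a', b'} \<in> H" "a' \<noteq> b'"
    using h(2) h2(1) graph_onD[OF W(2), of b' a'] by (auto simp: insert_commute)
  have sides2: "reach (H - {h2}) a' \<inter> reach (H - {h2}) b' = {}"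
    using forest_sides_disjoint[OF forest a'b'(1)] h2(1) by (simp add: insert_commute)
  have reach_W: "reach (H - {h}) s \<subseteq> W" if "s \<in> W" for h s
    using reach_subset[OF graph_on_Diff[OF W(2)] that] .
  have b'_side: "b' \<in> reach (H - {h1}) b" and a'_side: "a' \<in> reach (H - {h1}) b"
    using h1(2) h2(1) by auto
  have h2': "h2 = {a', b'}" using h2(1) by (simp add: insert_commute)
  obtain l1 where l1: "l1 \<in> reach (H - {h2}) b'" "degree H l1 \<le> 1"
    using forest_side_has_leaf[OF W forest a'b'(1)] unfolding h2' by this
  have "a \<notin> reach (H - {h2}) b'" using h1(1) h2(2) sides2 by blast
  then have l1_side: "l1 \<in> reach (H - {h1}) b"
    using reach_remove_other_edge[of a h1 H h2 b' b] h1(1) b'_side l1(1) by blast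
  have b: "{a, b} \<in> H" using h(1) h1(1) by simp
  obtain p where "p \<in> reach (H - {{a, b}}) b" "p \<noteq> b"
    using b'_side a'_side a'b'(2) h1(1) by blast
  then have "degree H b \<ge> 3" using degree_ge_3_if_side_nontrivial[OF W no_deg2 b] by blast
  then obtain t where t: "{b, t} \<in> H" "t \<noteq> a" "b' \<notin> reach (H - {{b, t}}) t"
    using forest_branch_avoiding[OF W(2) forest b(1)] by blast
  obtain l2 where l2: "l2 \<in> reach (H - {{b, t}}) t" "degree H l2 \<le> 1"
    using forest_side_has_leaf[OF W forest t(1)] .
  have b_not_t: "b \<notin> reach (H - {{b, t}}) t" using forest_endpoint_notin_side[OF forest t(1)] .
  have "{b, t} \<noteq> h1" using t(2) h1(1) graph_onD[OF W(2) t(1)] by (auto simp: doubleton_eq_iff)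
  then have "t \<in> reach (H - {h1}) b" using t(1) by (simp add: reach_edge)
  then have "l2 \<in> reach (H - {h1}) b"
    using reach_remove_other_edge[of b h1 H "{b, t}" t b] l2(1) b_not_t h1(1) by blast
  then have "l2 \<in> reach (H - {h1}) l1" using reach_trans[OF reach_sym[OF l1_side]] by blast
  moreover have "l2 \<in> reach (H - {h2}) a'"
  proof -
    have "b \<in> reach (H - {h2}) a'" using h1(1) h2(2) by simp
    then have "b' \<noteq> b" using sides2 reach_refl[of b'] by blast
    then have "{b, t} \<noteq> h2" using t(3) h2(1) reach_refl[of t] by (auto simp: doubleton_eq_iff)
    then have "t \<in> reach (H - {h2}) a'"
      using \<open>b \<in> reach (H - {h2}) a'\<close> t(1) by (simp add: reach_step)
    then show ?thesis
      using reach_remove_other_edge[of b' h2 H "{b, t}" t a'] t(3) l2(1) h2(1) by blast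
  qed
  then have "l2 \<notin> reach (H - {h2}) l1"
    using l1(1) sides2 reach_trans[of l1 "H - {h2}" b' l2] by blast
  moreover have "l1 \<in> W" using reach_W l1(1) a'b' graph_onD[OF W(2)] by blast
  moreover have "l2 \<in> W" using reach_W l2(1) t(1) graph_onD[OF W(2)] by blast
  ultimately show thesis using that l1(2) l2(2) by blast
qed

section \<open>Attaching a cherry\<close>

definition attachable :: "'a set \<Rightarrow> 'a set set \<Rightarrow> 'a set \<Rightarrow> 'a \<Rightarrow> 'a \<Rightarrow> 'a \<Rightarrow> 'a \<Rightarrow> bool" where
  "attachable W H h d c x y \<longleftrightarrow>
     graph_on W H \<and> h \<in> H \<and> distinct [d, c, x, y] \<and> {d, c, x, y} \<inter> W = {}"

lemma attachableD:
  assumes "attachable W H h d c x y"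
  shows "graph_on W H" "h \<in> H" "h \<subseteq> W" "d \<notin> W" "c \<notin> W" "x \<notin> W" "y \<notin> W"
    "d \<noteq> c" "d \<noteq> x" "d \<noteq> y" "c \<noteq> x" "c \<noteq> y" "x \<noteq> y"
proof -
  have *: "graph_on W H" "h \<in> H" "distinct [d, c, x, y]" "{d, c, x, y} \<inter> W = {}"
    using assms unfolding attachable_def by blast+
  then show "graph_on W H" "h \<in> H" "h \<subseteq> W" "d \<notin> W" "c \<notin> W" "x \<notin> W" "y \<notin> W"
    "d \<noteq> c" "d \<noteq> x" "d \<noteq> y" "c \<noteq> x" "c \<noteq> y" "x \<noteq> y"
    using graph_on_edge_subset[OF *(1,2)] by auto
qed

lemma attach_cherry_V_eq: "attach_cherry_V W d c x y = W \<union> {d, c, x, y}"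
  by (simp add: attach_cherry_V_def)

lemma attach_cherry_E_eq:
  "attach_cherry_E H h d c x y = (H - {h}) \<union> {{p, d} |p. p \<in> h} \<union> {{d, c}, {c, x}, {c, y}}"
  unfolding attach_cherry_E_def by (simp add: insert_commute)

lemma attach_cherry_E_iff:
  assumes "attachable W H h d c x y"
  shows "{a, b} \<in> attach_cherry_E H h d c x y \<longleftrightarrow>
    {a, b} = {d, c} \<or> {a, b} = {c, x} \<or> {a, b} = {c, y} \<or>
    ({a, b} \<in> H \<and> {a, b} \<noteq> h) \<or> (a = d \<and> b \<in> h) \<or> (b = d \<and> a \<in> h)"
proof -
  have "d \<notin> h" using attachableD[OF assms] by blast
  then have mid: "{a, b} \<in> {{p, d} |p. p \<in> h} \<longleftrightarrow> (a = d \<and> b \<in> h) \<or> (b = d \<and> a \<in> h)"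
    by (auto simp: doubleton_eq_iff)
  show ?thesis
    unfolding attach_cherry_E_eq Un_iff Diff_iff insert_iff singleton_iff empty_iff mid by argo
qed

lemma finite_attach_cherry_E: "finite H \<Longrightarrow> finite h \<Longrightarrow> finite (attach_cherry_E H h d c x y)"
  unfolding attach_cherry_E_eq by (simp add: Setcompr_eq_image)

lemma tree_iso_if_edges_image:
  assumes "bij_betw f V1 V2" "\<forall>e\<in>E1. e \<subseteq> V1" "(\<lambda>e. f ` e) ` E1 = E2" "\<forall>l\<in>L. f l = l"
  shows "tree_iso L V1 E1 V2 E2"
  unfolding tree_iso_def
proof (intro exI conjI ballI)
  have inj: "inj_on f V1" using assms(1) by (rule bij_betw_imp_inj_on)
  fix a b assume ab: "a \<in> V1" "b \<in> V1"
  show "{a, b} \<in> E1 \<longleftrightarrow> {f a, f b} \<in> E2"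
  proof
    assume "{a, b} \<in> E1"
    then show "{f a, f b} \<in> E2" using imageI[of "{a, b}" E1 "\<lambda>e. f ` e"] assms(3) by simp
  next
    assume "{f a, f b} \<in> E2"
    then have "f ` {a, b} \<in> (\<lambda>e. f ` e) ` E1" using assms(3) by simp
    then obtain e where e: "e \<in> E1" "f ` {a, b} = f ` e" by (rule imageE)
    then have "{a, b} = e" using inj_on_image_eq_iff[OF inj, of "{a, b}" e] assms(2) ab by simp
    then show "{a, b} \<in> E1" using e(1) by simp
  qed
qed (use assms(1,4) in auto)

lemma attach_cherry_E_subset:
  assumes ok: "attachable W H h d c x y" and e: "e \<in> attach_cherry_E H h d c x y"
  shows "e \<subseteq> attach_cherry_V W d c x y"
proof -
  consider "e \<in> H" | p where "p \<in> h" "e = {p, d}" | "e \<in> {{d, c}, {c, x}, {c, y}}"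
    using e unfolding attach_cherry_E_eq by blast
  then show ?thesis
    using graph_on_edge_subset[OF attachableD(1)[OF ok]] attachableD(3)[OF ok]
    unfolding attach_cherry_V_eq by cases auto
qed

lemma tree_iso_attach_same_edge:
  assumes ok1: "attachable W H h d1 c1 x y" and ok2: "attachable W H h d2 c2 x y"
    and L: "L \<subseteq> W \<union> {x, y}"
  shows "tree_iso L (attach_cherry_V W d1 c1 x y) (attach_cherry_E H h d1 c1 x y)
                    (attach_cherry_V W d2 c2 x y) (attach_cherry_E H h d2 c2 x y)"
proof (rule tree_iso_if_edges_image)
  define f where "f t = (if t = d1 then d2 else if t = c1 then c2 else t)" for t
  note o1 = attachableD[OF ok1] and o2 = attachableD[OF ok2]
  have fW: "f t = t" if "t \<in> W \<union> {x, y}" for t using that o1 unfolding f_def by auto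
  have fd: "f d1 = d2" and fc: "f c1 = c2" using o1 unfolding f_def by auto
  have fe: "f ` e = e" if "e \<subseteq> W" for e
  proof -
    have "f ` e = id ` e" using fW that by (intro image_cong) auto
    then show ?thesis by simp
  qed
  have "inj_on f (W \<union> {d1, c1, x, y})"
    using o1 o2 unfolding inj_on_def f_def by auto
  moreover have "f ` (W \<union> {d1, c1, x, y}) = W \<union> {d2, c2, x, y}"
    using fe[of W] fW fd fc by auto
  ultimately show "bij_betw f (attach_cherry_V W d1 c1 x y) (attach_cherry_V W d2 c2 x y)"
    unfolding bij_betw_def attach_cherry_V_eq by blast
  have "(\<lambda>e. f ` e) ` (H - {h}) = id ` (H - {h})"
    using fe graph_on_edge_subset[OF o1(1)] by (intro image_cong) auto
  moreover have "(\<lambda>e. f ` e) ` {{p, d1} |p. p \<in> h} = {{p, d2} |p. p \<in> h}"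
    using fW fd o1(3) unfolding Setcompr_eq_image image_image by (auto intro!: image_cong)
  ultimately show "(\<lambda>e. f ` e) ` attach_cherry_E H h d1 c1 x y = attach_cherry_E H h d2 c2 x y"
    unfolding attach_cherry_E_eq image_Un using fW fd fc by simp
  show "\<forall>l\<in>L. f l = l" using L fW by auto
  show "\<forall>e\<in>attach_cherry_E H h d1 c1 x y. e \<subseteq> attach_cherry_V W d1 c1 x y"
    using attach_cherry_E_subset[OF ok1] by blast
qed

lemma tree_iso_attach_fixes_cherry:
  assumes ok1: "attachable W H h1 d1 c1 x y" and ok2: "attachable W H h2 d2 c2 x y"
    and iso: "tree_iso L (attach_cherry_V W d1 c1 x y) (attach_cherry_E H h1 d1 c1 x y)
                         (attach_cherry_V W d2 c2 x y) (attach_cherry_E H h2 d2 c2 x y)"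
    and L: "x \<in> L" "y \<in> L"
  obtains f where "inj_on f (attach_cherry_V W d1 c1 x y)"
    "\<forall>a\<in>attach_cherry_V W d1 c1 x y. \<forall>b\<in>attach_cherry_V W d1 c1 x y.
       {a, b} \<in> attach_cherry_E H h1 d1 c1 x y \<longleftrightarrow> {f a, f b} \<in> attach_cherry_E H h2 d2 c2 x y"
    "\<forall>l\<in>L. f l = l" "f c1 = c2" "f d1 = d2"
proof -
  note o1 = attachableD[OF ok1] and o2 = attachableD[OF ok2]
  obtain f where bij: "bij_betw f (attach_cherry_V W d1 c1 x y) (attach_cherry_V W d2 c2 x y)"
    and edges: "\<forall>a\<in>attach_cherry_V W d1 c1 x y. \<forall>b\<in>attach_cherry_V W d1 c1 x y.
       {a, b} \<in> attach_cherry_E H h1 d1 c1 x y \<longleftrightarrow> {f a, f b} \<in> attach_cherry_E H h2 d2 c2 x y"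
    and fixes_L: "\<forall>l\<in>L. f l = l"
    using iso unfolding tree_iso_def by blast
  have HW: "p \<in> W" "q \<in> W" if "{p, q} \<in> H" for p q using graph_onD[OF o1(1) that] by auto
  have inj: "inj_on f (attach_cherry_V W d1 c1 x y)" using bij by (rule bij_betw_imp_inj_on)
  have inV: "x \<in> attach_cherry_V W d1 c1 x y" "y \<in> attach_cherry_V W d1 c1 x y"
    "c1 \<in> attach_cherry_V W d1 c1 x y" "d1 \<in> attach_cherry_V W d1 c1 x y"
    by (simp_all add: attach_cherry_V_eq)
  have fx: "f x = x" "f y = y" using fixes_L L by auto
  have "{c1, x} \<in> attach_cherry_E H h1 d1 c1 x y" by (simp add: attach_cherry_E_iff[OF ok1])
  then have "{f c1, x} \<in> attach_cherry_E H h2 d2 c2 x y" using edges inV fx by auto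
  then have fc: "f c1 = c2"
    unfolding attach_cherry_E_iff[OF ok2] using o2 HW[of _ x] by (auto simp: doubleton_eq_iff)
  have "{d1, c1} \<in> attach_cherry_E H h1 d1 c1 x y" by (simp add: attach_cherry_E_iff[OF ok1])
  then have "{f d1, c2} \<in> attach_cherry_E H h2 d2 c2 x y" using edges inV fc by auto
  then have "f d1 = d2 \<or> f d1 = x \<or> f d1 = y"
    unfolding attach_cherry_E_iff[OF ok2] using o2 HW[of _ c2] by (auto simp: doubleton_eq_iff)
  moreover have "f d1 \<noteq> x" "f d1 \<noteq> y" using inj inV fx o1 unfolding inj_on_def by metis+
  ultimately have "f d1 = d2" by blast
  then show thesis using that inj edges fixes_L fc by blast
qed

lemma tree_iso_attach_preserves_reach:
  assumes ok1: "attachable W H h1 d1 c1 x y" and ok2: "attachable W H h2 d2 c2 x y"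
    and iso: "tree_iso L (attach_cherry_V W d1 c1 x y) (attach_cherry_E H h1 d1 c1 x y)
                         (attach_cherry_V W d2 c2 x y) (attach_cherry_E H h2 d2 c2 x y)"
    and L: "x \<in> L" "y \<in> L" "l1 \<in> L" "l2 \<in> L" and r: "l2 \<in> reach (H - {h1}) l1"
  shows "l2 \<in> reach (H - {h2}) l1"
proof -
  note o1 = attachableD[OF ok1]
  obtain f where inj: "inj_on f (attach_cherry_V W d1 c1 x y)"
    and edges: "\<forall>a\<in>attach_cherry_V W d1 c1 x y. \<forall>b\<in>attach_cherry_V W d1 c1 x y.
       {a, b} \<in> attach_cherry_E H h1 d1 c1 x y \<longleftrightarrow> {f a, f b} \<in> attach_cherry_E H h2 d2 c2 x y"
    and fixes_L: "\<forall>l\<in>L. f l = l" and fc: "f c1 = c2" and fd: "f d1 = d2"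
    using tree_iso_attach_fixes_cherry[OF ok1 ok2 iso L(1,2)] .
  have "f q \<in> reach (H - {h2}) (f p)" if pq: "{p, q} \<in> H - {h1}" for p q
  proof -
    have pW: "p \<in> W" "q \<in> W" using pq graph_onD[OF o1(1)] by auto
    then have pV: "p \<in> attach_cherry_V W d1 c1 x y" "q \<in> attach_cherry_V W d1 c1 x y"
      and cdV: "c1 \<in> attach_cherry_V W d1 c1 x y" "d1 \<in> attach_cherry_V W d1 c1 x y"
      by (simp_all add: attach_cherry_V_eq)
    have "{p, q} \<in> attach_cherry_E H h1 d1 c1 x y" using pq by (simp add: attach_cherry_E_iff[OF ok1])
    then have E2: "{f p, f q} \<in> attach_cherry_E H h2 d2 c2 x y" using edges pV by auto
    have "f p \<noteq> d2" "f q \<noteq> d2" "f p \<noteq> c2" "f q \<noteq> c2"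
      using inj pV cdV fd fc pW o1 unfolding inj_on_def by metis+
    then have "{f p, f q} \<in> H - {h2}" using E2 unfolding attach_cherry_E_iff[OF ok2]
      by (auto simp: doubleton_eq_iff)
    then show ?thesis by (simp add: reach_edge)
  qed
  then have "f l2 \<in> reach (H - {h2}) (f l1)" using reach_map[OF r] by blast
  then show ?thesis using fixes_L L by simp
qed

lemma tree_iso_attach_imp_same_edge:
  assumes ok1: "attachable W H h1 d1 c1 x y" and ok2: "attachable W H h2 d2 c2 x y"
    and W: "finite W" and forest: "forest H" and no_deg2: "\<forall>t\<in>W. degree H t \<noteq> 2"
    and conn: "\<forall>p\<in>W. \<forall>q\<in>W. q \<in> reach H p"
    and leaves: "\<forall>l\<in>W. degree H l \<le> 1 \<longrightarrow> l \<in> L" and L: "L \<subseteq> W \<union> {x, y}" "x \<in> L" "y \<in> L"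
    and iso: "tree_iso L (attach_cherry_V W d1 c1 x y) (attach_cherry_E H h1 d1 c1 x y)
                         (attach_cherry_V W d2 c2 x y) (attach_cherry_E H h2 d2 c2 x y)"
  shows "h1 = h2"
proof (rule ccontr)
  assume "h1 \<noteq> h2"
  then obtain l1 l2 where l: "l1 \<in> W" "degree H l1 \<le> 1" "l2 \<in> W" "degree H l2 \<le> 1"
    and sep: "l2 \<in> reach (H - {h1}) l1" "l2 \<notin> reach (H - {h2}) l1"
    using forest_separating_leaves[OF W attachableD(1)[OF ok1] forest no_deg2 conn
        attachableD(2)[OF ok1] attachableD(2)[OF ok2]] by blast
  have "l1 \<in> L" "l2 \<in> L" using leaves l by auto
  then show False
    using tree_iso_attach_preserves_reach[OF ok1 ok2 iso L(2,3)] sep by blast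
qed

section \<open>The reduced tree\<close>

locale cherry_setting =
  fixes X V :: "'a set" and E :: "'a set set" and v w z' z q1 q2 :: 'a
  assumes graph: "graph_on V E" and finite_V: "finite V" and forest: "forest E"
    and connected: "\<forall>a\<in>V. \<forall>b\<in>V. b \<in> reach E a"
    and leaf_iff: "\<forall>t\<in>V. degree E t \<le> 1 \<longleftrightarrow> t \<in> X" and no_deg2: "\<forall>t\<in>V. degree E t \<noteq> 2"
    and X_subset: "X \<subseteq> V"
    and neighbors_v: "neighbors E v = {z'}" and neighbors_w: "neighbors E w = {z'}"
    and neighbors_z': "neighbors E z' = {v, w, z}" and neighbors_z: "neighbors E z = {z', q1, q2}"
    and distinct: "distinct [v, w, z', z, q1, q2]"
    and q1q2_notin: "{q1, q2} \<notin> E"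
begin

text \<open>(W, H) is the tree T' obtained from T by a cherry reduction of type 2 using [v, w]: K are
  the edges of T not meeting S, and suppressing z contributes the edge {q1, q2}.\<close>

definition S where "S = {v, w, z', z}"
definition W where "W = V - S"
definition K where "K = {e\<in>E. e \<inter> S = {}}"
definition H where "H = K \<union> {{q1, q2}}"

lemma finite_E: "finite E"
  using graph_on_finite[OF finite_V graph] .

lemma edge_v: "{v, u} \<in> E \<longleftrightarrow> u = z'" and edge_w: "{w, u} \<in> E \<longleftrightarrow> u = z'"
  and edge_z': "{z', u} \<in> E \<longleftrightarrow> u = v \<or> u = w \<or> u = z"
  and edge_z: "{z, u} \<in> E \<longleftrightarrow> u = z' \<or> u = q1 \<or> u = q2"
  using neighbors_v neighbors_w neighbors_z' neighbors_z neighbors_iff[OF graph] by blast+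

lemma z_edges: "{z, q1} \<in> E" "{z, q2} \<in> E" "{q1, z} \<in> E" "{q2, z} \<in> E"
  using edge_z by (auto simp: insert_commute)

lemma in_V [simp]: "v \<in> V" "w \<in> V" "z' \<in> V" "z \<in> V" "q1 \<in> V" "q2 \<in> V"
  using graph_onD[OF graph] edge_v edge_w z_edges by blast+

lemma edge_at_S:
  assumes "{p, u} \<in> E" "p \<in> S"
  shows "(p = v \<and> u = z') \<or> (p = w \<and> u = z') \<or> (p = z' \<and> (u = v \<or> u = w \<or> u = z)) \<or>
         (p = z \<and> (u = z' \<or> u = q1 \<or> u = q2))"
  using assms edge_v edge_w edge_z' edge_z unfolding S_def by blast

lemma edge_into_S:
  assumes "{t, u} \<in> E" "t \<notin> S" "u \<in> S"
  shows "u = z \<and> (t = q1 \<or> t = q2)"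
  using edge_at_S[of u t] assms distinct unfolding S_def by (auto simp: insert_commute)

lemma q_notin_S: "q1 \<notin> S" "q2 \<notin> S" and z_in_S: "z \<in> S"
  using distinct unfolding S_def by auto

lemma q_in_W: "q1 \<in> W" "q2 \<in> W"
  using q_notin_S unfolding W_def by auto

lemma K_edge_iff: "{p, q} \<in> K \<longleftrightarrow> {p, q} \<in> E \<and> p \<notin> S \<and> q \<notin> S"
  unfolding K_def by auto

lemma K_subset_E: "K \<subseteq> E"
  unfolding K_def by auto

lemma K_edge_subset_W: "g \<in> K \<Longrightarrow> g \<subseteq> W"
  using graph_on_edge_subset[OF graph] unfolding K_def W_def by blast

lemma H_minus_q1q2: "H - {{q1, q2}} = K"
  using q1q2_notin unfolding H_def K_def by auto

lemma graph_on_H: "graph_on W H"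
  unfolding graph_on_def
proof
  fix e assume "e \<in> H"
  then consider "e = {q1, q2}" | "e \<in> K" unfolding H_def by blast
  then show "\<exists>p q. e = {p, q} \<and> p \<in> W \<and> q \<in> W \<and> p \<noteq> q"
  proof cases
    case 1
    moreover have "q1 \<noteq> q2" using distinct by simp
    ultimately show ?thesis using q_in_W by blast
  next
    case 2
    then have "e \<in> E" using K_subset_E by blast
    then obtain p q where "e = {p, q}" "p \<noteq> q" using graph unfolding graph_on_def by blast
    moreover have "p \<in> W" "q \<in> W" using K_edge_subset_W[OF 2] calculation(1) by auto
    ultimately show ?thesis by blast
  qed
qed

lemma finite_W: "finite W"
  unfolding W_def using finite_V by simp

lemma q1q2_in_H: "{q1, q2} \<in> H" "{q2, q1} \<in> H"
  unfolding H_def by (auto simp: insert_commute)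

lemma forest_H: "forest H"
  unfolding forest_def
proof (intro allI impI notI)
  fix a b assume ab: "{a, b} \<in> H" and r: "b \<in> reach (H - {{a, b}}) a"
  have "a \<in> W" "b \<in> W" using graph_onD[OF graph_on_H ab] by auto
  then have z_ab: "z \<noteq> a" "z \<noteq> b" unfolding W_def S_def by auto
  show False
  proof (cases "{a, b} = {q1, q2}")
    case False
    then have abE: "{a, b} \<in> E" using ab K_subset_E unfolding H_def by auto
    text \<open>A path in H avoiding {a, b} lifts to E, replacing the edge {q1, q2} by q1 - z - q2.\<close>
    have "q \<in> reach (E - {{a, b}}) p" if pq: "{p, q} \<in> H - {{a, b}}" for p q
    proof (cases "{p, q} = {q1, q2}")
      case True
      then have "{p, z} \<in> E - {{a, b}}" "{z, q} \<in> E - {{a, b}}"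
        using z_edges z_ab by (auto simp: doubleton_eq_iff)
      then show ?thesis by (meson reach_edge reach_step)
    next
      case False
      then show ?thesis using pq K_subset_E unfolding H_def by (auto intro: reach_edge)
    qed
    then have "b \<in> reach (E - {{a, b}}) a" using reach_map[OF r, of id] by simp
    then show False using forest abE unfolding forest_def by blast
  next
    case True
    then have "b \<in> reach K a" using r H_minus_q1q2 by simp
    moreover have "K \<subseteq> E - {{a, z}}" using z_in_S unfolding K_def by auto
    ultimately have "b \<in> reach (E - {{a, z}}) a" by (rule reach_mono[rotated])
    moreover have "{a, z} \<in> E" "{b, z} \<in> E - {{a, z}}"
      using True z_edges z_ab distinct by (auto simp: doubleton_eq_iff)
    ultimately have "z \<in> reach (E - {{a, z}}) a" by (blast intro: reach_step)
    then show False using forest \<open>{a, z} \<in> E\<close> unfolding forest_def by blast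
  qed
qed

text \<open>Collapsing S to q1 maps paths of T to paths of T'.\<close>
lemma reach_H_collapse:
  assumes "{p, q} \<in> E"
  shows "(if q \<in> S then q1 else q) \<in> reach H (if p \<in> S then q1 else p)"
proof (cases "p \<in> S \<or> q \<in> S")
  case True
  then have "p \<in> S \<and> (q \<in> S \<or> q = q1 \<or> q = q2) \<or> q \<in> S \<and> (p = q1 \<or> p = q2)"
    using edge_at_S[OF assms] edge_into_S[OF assms] unfolding S_def by blast
  then show ?thesis using q_notin_S q1q2_in_H by (auto intro: reach_edge)
next
  case False
  then have "{p, q} \<in> H" using assms unfolding H_def K_def S_def by auto
  then show ?thesis using False by (simp add: reach_edge)
qed

lemma connected_H: "\<forall>p\<in>W. \<forall>q\<in>W. q \<in> reach H p"
proof (intro ballI)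
  fix p q assume "p \<in> W" "q \<in> W"
  then have "q \<in> reach E p" "p \<notin> S" "q \<notin> S" using connected unfolding W_def by auto
  then show "q \<in> reach H p" using reach_map[of q E p "\<lambda>t. if t \<in> S then q1 else t" H]
    reach_H_collapse by simp
qed

lemma neighbors_H_other:
  assumes "t \<in> W" "t \<noteq> q1" "t \<noteq> q2"
  shows "neighbors H t = neighbors E t"
proof -
  have tS: "t \<notin> S" using assms(1) unfolding W_def by simp
  have "{t, u} \<in> H \<longleftrightarrow> {t, u} \<in> E" for u
  proof
    assume "{t, u} \<in> H"
    then show "{t, u} \<in> E" using assms unfolding H_def K_def by (auto simp: doubleton_eq_iff)
  next
    assume tu: "{t, u} \<in> E"
    have "u \<notin> S" using edge_into_S[OF tu tS] assms by auto
    then show "{t, u} \<in> H" using tu tS unfolding H_def K_def by auto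
  qed
  then show ?thesis unfolding neighbors_def by simp
qed

lemma neighbors_H_q:
  assumes "t = q1 \<and> t' = q2 \<or> t = q2 \<and> t' = q1"
  shows "neighbors H t = insert t' (neighbors E t - {z})"
proof -
  have tS: "t \<notin> S" "t' \<notin> S" using assms q_notin_S by auto
  have tt: "{t, t'} = {q1, q2}" "t \<noteq> t'" using assms distinct by (auto simp: insert_commute)
  have "u \<in> neighbors H t \<longleftrightarrow> u \<in> insert t' (neighbors E t - {z})" for u
  proof
    assume "u \<in> neighbors H t"
    then have u: "{t, u} \<in> H" "u \<noteq> t" by (auto simp: neighbors_def)
    show "u \<in> insert t' (neighbors E t - {z})"
    proof (cases "{t, u} = {q1, q2}")
      case True then show ?thesis using tt u(2) by (auto simp: doubleton_eq_iff)
    next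
      case False
      then have "{t, u} \<in> E" "u \<notin> S" using u(1) K_edge_iff unfolding H_def by auto
      then show ?thesis using u(2) z_in_S by (auto simp: neighbors_def)
    qed
  next
    assume "u \<in> insert t' (neighbors E t - {z})"
    then show "u \<in> neighbors H t"
    proof
      assume "u = t'" then show ?thesis using tt unfolding neighbors_def H_def by simp
    next
      assume "u \<in> neighbors E t - {z}"
      then have tu: "{t, u} \<in> E" "u \<noteq> t" "u \<noteq> z" by (auto simp: neighbors_def)
      have "u \<notin> S" using edge_into_S[OF tu(1) tS(1)] tu(3) by auto
      then show ?thesis using tu tS K_edge_iff unfolding neighbors_def H_def by auto
    qed
  qed
  then show ?thesis by auto
qed

text \<open>At q1 and q2 the edge to z is traded for the new edge {q1, q2}.\<close>
lemma degree_H: "t \<in> W \<Longrightarrow> degree H t = degree E t"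
proof -
  assume tW: "t \<in> W"
  have finN: "finite (neighbors E t)"
    using neighbors_subset[OF graph] finite_V by (rule finite_subset)
  show ?thesis
  proof (cases "t = q1 \<or> t = q2")
    case False
    then show ?thesis using neighbors_H_other[OF tW]
      degree_eq_card_neighbors[OF graph] degree_eq_card_neighbors[OF graph_on_H] by simp
  next
    case True
    then obtain t' where tt: "t = q1 \<and> t' = q2 \<or> t = q2 \<and> t' = q1" by blast
    have zN: "z \<in> neighbors E t" using True z_edges neighbors_iff[OF graph] by auto
    have tN: "t' \<notin> neighbors E t"
      using tt q1q2_notin neighbors_iff[OF graph] by (auto simp: insert_commute)
    have "card (neighbors H t) = Suc (card (neighbors E t - {z}))"
      using neighbors_H_q[OF tt] tN finN by simp
    also have "\<dots> = card (neighbors E t)" using zN finN by (metis card_Suc_Diff1)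
    finally show ?thesis
      using degree_eq_card_neighbors[OF graph] degree_eq_card_neighbors[OF graph_on_H] by simp
  qed
qed

lemma no_deg2_H: "\<forall>t\<in>W. degree H t \<noteq> 2"
  using degree_H no_deg2 unfolding W_def by auto

lemma leaves_H: "\<forall>t\<in>W. degree H t \<le> 1 \<longrightarrow> t \<in> X - {v, w}"
  using degree_H leaf_iff unfolding W_def S_def by auto

definition pruned :: "'a set set \<Rightarrow> 'a set set" where
  "pruned F = {g\<in>F. g \<inter> {v, w, z'} = {}}"

definition red_edge :: "'a set \<Rightarrow> 'a set" where
  "red_edge e = (if z \<in> e then {q1, q2} else e)"

lemma pruned_E: "pruned E = K \<union> {{z, q1}, {z, q2}}"
proof
  show "pruned E \<subseteq> K \<union> {{z, q1}, {z, q2}}"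
  proof
    fix g assume g: "g \<in> pruned E"
    show "g \<in> K \<union> {{z, q1}, {z, q2}}"
    proof (cases "z \<in> g")
      case False
      then show ?thesis using g unfolding pruned_def K_def S_def by auto
    next
      case True
      obtain t where t: "g = {z, t}" using graph_on_edge_containing[OF graph _ True] g
        unfolding pruned_def by blast
      then have "{z, t} \<in> E" "t \<noteq> z'" using g unfolding pruned_def by auto
      then show ?thesis using t edge_z by auto
    qed
  qed
  show "K \<union> {{z, q1}, {z, q2}} \<subseteq> pruned E"
    using z_edges distinct unfolding pruned_def K_def S_def by auto
qed

lemma pruned_attach:
  assumes "attachable V E e u c x y"
  shows "pruned (attach_cherry_E E e u c x y) =
     (pruned E - {e}) \<union> pruned {{p, u} |p. p \<in> e} \<union> {{u, c}, {c, x}, {c, y}}"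
proof -
  have "u \<notin> {v, w, z'}" "c \<notin> {v, w, z'}" "x \<notin> {v, w, z'}" "y \<notin> {v, w, z'}"
    using attachableD[OF assms] in_V by blast+
  then have C: "pruned {{u, c}, {c, x}, {c, y}} = {{u, c}, {c, x}, {c, y}}"
    unfolding pruned_def by auto
  have "pruned (A \<union> B) = pruned A \<union> pruned B" "pruned (A - B) = pruned A - B" for A B
    unfolding pruned_def by auto
  then show ?thesis by (simp only: attach_cherry_E_eq C)
qed

lemma attach_edge_cases:
  assumes "e \<in> E" "e \<noteq> {v, z'}" "e \<noteq> {w, z'}"
  shows "e = {z', z} \<or> e = {z, q1} \<or> e = {z, q2} \<or> e \<in> K"
proof -
  obtain p q where pq: "e = {p, q}" using graph assms(1) unfolding graph_on_def by blast
  have pE: "{p, q} \<in> E" "{q, p} \<in> E" using pq assms(1) by (auto simp: insert_commute)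
  show ?thesis
  proof (cases "p \<in> S \<or> q \<in> S")
    case False then show ?thesis using pq pE(1) K_edge_iff by auto
  next
    case True
    then show ?thesis
    proof
      assume "p \<in> S"
      then show ?thesis using edge_at_S[OF pE(1)] assms pq by (auto simp: insert_commute)
    next
      assume "q \<in> S"
      then show ?thesis using edge_at_S[OF pE(2)] assms pq by (auto simp: insert_commute)
    qed
  qed
qed

text \<open>The reduction is determined by the third neighbour s of z', which is the subdivision
  vertex u if the cherry was attached to {z', z}, and z otherwise.\<close>
lemma cherry_reduction2_unfold:
  assumes ok: "attachable V E e u c x y" and e: "e \<noteq> {v, z'}" "e \<noteq> {w, z'}"
    and red: "cherry_reduction2 (attach_cherry_V V u c x y) (attach_cherry_E E e u c x y) v w V' E'"
  obtains a b where
    "neighbors (pruned (attach_cherry_E E e u c x y)) (if z' \<in> e then u else z) = {a, b}"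
    "V' = attach_cherry_V V u c x y - {v, w, z'} - {if z' \<in> e then u else z}"
    "E' = (pruned (attach_cherry_E E e u c x y) -
            {{a, if z' \<in> e then u else z}, {if z' \<in> e then u else z, b}}) \<union> {{a, b}}"
proof -
  note o = attachableD[OF ok]
  obtain z'' s a b where r:
    "v \<in> leaves (attach_cherry_V V u c x y) (attach_cherry_E E e u c x y)"
    "{v, z''} \<in> attach_cherry_E E e u c x y" "{z'', s} \<in> attach_cherry_E E e u c x y" "s \<notin> {v, w}"
    "neighbors {g \<in> attach_cherry_E E e u c x y. g \<inter> {v, w, z''} = {}} s = {a, b}"
    "V' = (attach_cherry_V V u c x y - {v, w, z''}) - {s}"
    "E' = ({g \<in> attach_cherry_E E e u c x y. g \<inter> {v, w, z''} = {}} - {{a, s}, {s, b}}) \<union> {{a, b}}"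
    using red unfolding cherry_reduction2_def Let_def by blast
  have "e \<subseteq> V" using o(3) .
  then have fin: "finite (attach_cherry_E E e u c x y)"
    using finite_attach_cherry_E[OF finite_E] finite_V finite_subset by blast
  have "{v, z'} \<in> attach_cherry_E E e u c x y"
    unfolding attach_cherry_E_iff[OF ok] using edge_v e(1) by simp
  moreover have "degree (attach_cherry_E E e u c x y) v \<le> 1" using r(1) unfolding leaves_def by simp
  ultimately have "{v, z''} = {v, z'}" using degree_le_1_unique_edge[OF fin] r(2) by blast
  then have z'': "z'' = z'" using distinct by (auto simp: doubleton_eq_iff)
  have "s = (if z' \<in> e then u else z)"
  proof -
    have "{z', s} \<in> E \<and> {z', s} \<noteq> e \<or> s = u \<and> z' \<in> e"
      using r(3) o unfolding z'' attach_cherry_E_iff[OF ok]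
      by (auto simp: doubleton_eq_iff neq_if_mem_not_mem[of _ V])
    moreover have "z' \<in> e \<longleftrightarrow> e = {z', z}"
      using attach_edge_cases[OF o(2) e] distinct unfolding K_def S_def by auto
    ultimately show ?thesis using edge_z' r(4) by auto
  qed
  then show thesis using that r unfolding z'' pruned_def by blast
qed

lemma reduction_at_z'z:
  assumes ok: "attachable V E e u c x y" and e: "e = {z', z}"
    and nb: "neighbors (pruned (attach_cherry_E E e u c x y)) u = {a, b}"
  shows "attachable W H {q1, q2} z c x y"
    "attach_cherry_V V u c x y - {v, w, z'} - {u} = attach_cherry_V W z c x y"
    "(pruned (attach_cherry_E E e u c x y) - {{a, u}, {u, b}}) \<union> {{a, b}} =
       attach_cherry_E H {q1, q2} z c x y"
proof -
  note o = attachableD[OF ok]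
  note neq = neq_if_mem_not_mem[of _ V]
  have "pruned {{p, u} |p. p \<in> e} = {{z, u}}"
    unfolding e Setcompr_pair pruned_def using o distinct by (auto simp: neq)
  moreover have "e \<notin> K \<union> {{z, q1}, {z, q2}}"
    using e distinct unfolding K_def S_def by (auto simp: doubleton_eq_iff)
  ultimately have E0: "pruned (attach_cherry_E E e u c x y) =
     K \<union> {{z, q1}, {z, q2}, {z, u}, {u, c}, {c, x}, {c, y}}"
    unfolding pruned_attach[OF ok] pruned_E by auto
  have uK: "\<forall>g\<in>K. u \<notin> g" using K_edge_subset_W o(4) unfolding W_def by blast
  have "neighbors {{z, q1}, {z, q2}, {z, u}, {u, c}, {c, x}, {c, y}} u = {z, c}"
    unfolding neighbors_def using o distinct by (auto simp: doubleton_eq_iff neq)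
  then have ab: "a = z \<and> b = c \<or> a = c \<and> b = z"
    using nb unfolding E0 neighbors_Un_avoiding[OF uK] by (simp add: doubleton_eq_iff)
  have "(pruned (attach_cherry_E E e u c x y) - {{a, u}, {u, b}}) \<union> {{a, b}} =
     K \<union> ({{z, q1}, {z, q2}, {z, u}, {u, c}, {c, x}, {c, y}} - {{a, u}, {u, b}} \<union> {{a, b}})"
    unfolding E0 using uK by (intro Un_Diff_Un_if_disjoint) auto
  also have "\<dots> = K \<union> ({{q1, z}, {q2, z}} \<union> {{z, c}, {c, x}, {c, y}})"
    using ab o distinct
    by (elim disjE) (simp_all add: insert_Diff_if doubleton_eq_iff insert_commute neq)
  also have "\<dots> = attach_cherry_E H {q1, q2} z c x y"
    unfolding attach_cherry_E_def Setcompr_pair H_minus_q1q2 by auto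
  finally show "(pruned (attach_cherry_E E e u c x y) - {{a, u}, {u, b}}) \<union> {{a, b}} =
       attach_cherry_E H {q1, q2} z c x y" .
  show "attachable W H {q1, q2} z c x y"
    unfolding attachable_def using graph_on_H q1q2_in_H o distinct unfolding W_def S_def
    by (auto simp: neq)
  show "attach_cherry_V V u c x y - {v, w, z'} - {u} = attach_cherry_V W z c x y"
    unfolding attach_cherry_V_eq W_def S_def using o distinct by (auto simp: neq)
qed

lemma reduction_at_zq:
  assumes ok: "attachable V E e u c x y" and e: "e = {z, q}"
    and qr: "q = q1 \<and> r = q2 \<or> q = q2 \<and> r = q1"
    and nb: "neighbors (pruned (attach_cherry_E E e u c x y)) z = {a, b}"
  shows "attachable W H {q1, q2} u c x y"
    "attach_cherry_V V u c x y - {v, w, z'} - {z} = attach_cherry_V W u c x y"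
    "(pruned (attach_cherry_E E e u c x y) - {{a, z}, {z, b}}) \<union> {{a, b}} =
       attach_cherry_E H {q1, q2} u c x y"
proof -
  note o = attachableD[OF ok]
  note neq = neq_if_mem_not_mem[of _ V]
  have q: "q \<in> V" "r \<in> V" "q \<notin> {v, w, z', z}" "r \<notin> {v, w, z', z}" "q \<noteq> r"
    using qr distinct by auto
  have M: "pruned {{p, u} |p. p \<in> e} = {{z, u}, {q, u}}"
    unfolding e Setcompr_pair pruned_def using o q distinct by (auto simp: neq)
  have zq: "{{z, q1}, {z, q2}} - {e} = {{z, r}}"
    using qr distinct unfolding e
    by (elim disjE) (simp_all add: insert_Diff_if doubleton_eq_iff not_sym[of q1 q2])
  have "e \<notin> K" using e z_in_S unfolding K_def by auto
  then have "K - {e} = K" by blast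
  then have "K \<union> {{z, q1}, {z, q2}} - {e} = K \<union> {{z, r}}" by (simp only: Un_Diff zq)
  then have E0: "pruned (attach_cherry_E E e u c x y) =
     K \<union> {{z, r}, {z, u}, {q, u}, {u, c}, {c, x}, {c, y}}"
    unfolding pruned_attach[OF ok] pruned_E M by auto
  have zK: "\<forall>g\<in>K. z \<notin> g" using z_in_S unfolding K_def by auto
  have "neighbors {{z, r}, {z, u}, {q, u}, {u, c}, {c, x}, {c, y}} z = {r, u}"
    unfolding neighbors_def using o q distinct by (auto simp: doubleton_eq_iff neq)
  then have ab: "a = r \<and> b = u \<or> a = u \<and> b = r"
    using nb unfolding E0 neighbors_Un_avoiding[OF zK] by (simp add: doubleton_eq_iff)
  have "(pruned (attach_cherry_E E e u c x y) - {{a, z}, {z, b}}) \<union> {{a, b}} =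
     K \<union> ({{z, r}, {z, u}, {q, u}, {u, c}, {c, x}, {c, y}} - {{a, z}, {z, b}} \<union> {{a, b}})"
    unfolding E0 using zK by (intro Un_Diff_Un_if_disjoint) auto
  also have "\<dots> = K \<union> ({{q, u}, {r, u}} \<union> {{u, c}, {c, x}, {c, y}})"
    using ab o q distinct
    by (elim disjE) (simp_all add: insert_Diff_if doubleton_eq_iff insert_commute neq)
  also have "\<dots> = attach_cherry_E H {q1, q2} u c x y"
  proof -
    have "{{q, u}, {r, u}} = {{q1, u}, {q2, u}}" using qr by auto
    then show ?thesis
      unfolding attach_cherry_E_def Setcompr_pair H_minus_q1q2 by (simp only: Un_assoc)
  qed
  finally show "(pruned (attach_cherry_E E e u c x y) - {{a, z}, {z, b}}) \<union> {{a, b}} =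
       attach_cherry_E H {q1, q2} u c x y" .
  show "attachable W H {q1, q2} u c x y"
    unfolding attachable_def using graph_on_H q1q2_in_H o unfolding W_def by auto
  show "attach_cherry_V V u c x y - {v, w, z'} - {z} = attach_cherry_V W u c x y"
    unfolding attach_cherry_V_eq W_def S_def using o distinct by (auto simp: neq)
qed

lemma reduction_at_K:
  assumes ok: "attachable V E e u c x y" and eK: "e \<in> K"
    and nb: "neighbors (pruned (attach_cherry_E E e u c x y)) z = {a, b}"
  shows "attachable W H e u c x y"
    "attach_cherry_V V u c x y - {v, w, z'} - {z} = attach_cherry_V W u c x y"
    "(pruned (attach_cherry_E E e u c x y) - {{a, z}, {z, b}}) \<union> {{a, b}} =
       attach_cherry_E H e u c x y"
proof -
  note o = attachableD[OF ok]
  note neq = neq_if_mem_not_mem[of _ V]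
  obtain p q where pq: "e = {p, q}" "p \<noteq> q" using graph o(2) unfolding graph_on_def by blast
  have p: "p \<in> V" "q \<in> V" "p \<notin> S" "q \<notin> S"
    using eK pq o(3) K_edge_iff by auto
  then have "pruned {{p, u} |p. p \<in> e} = {{p, u}, {q, u}}"
    unfolding pq(1) Setcompr_pair pruned_def S_def using o by (auto simp: neq)
  moreover have "K \<union> {{z, q1}, {z, q2}} - {e} = (K - {e}) \<union> {{z, q1}, {z, q2}}"
    using pq p z_in_S by (auto simp: doubleton_eq_iff)
  ultimately have E0: "pruned (attach_cherry_E E e u c x y) =
     (K - {e}) \<union> {{z, q1}, {z, q2}, {p, u}, {q, u}, {u, c}, {c, x}, {c, y}}"
    unfolding pruned_attach[OF ok] pruned_E by auto
  have zK: "\<forall>g\<in>K - {e}. z \<notin> g" using z_in_S unfolding K_def by auto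
  have "neighbors {{z, q1}, {z, q2}, {p, u}, {q, u}, {u, c}, {c, x}, {c, y}} z = {q1, q2}"
    unfolding neighbors_def using o p distinct z_in_S by (auto simp: doubleton_eq_iff neq)
  then have ab: "a = q1 \<and> b = q2 \<or> a = q2 \<and> b = q1"
    using nb unfolding E0 neighbors_Un_avoiding[OF zK] by (simp add: doubleton_eq_iff)
  have "(pruned (attach_cherry_E E e u c x y) - {{a, z}, {z, b}}) \<union> {{a, b}} =
     (K - {e}) \<union>
       ({{z, q1}, {z, q2}, {p, u}, {q, u}, {u, c}, {c, x}, {c, y}} - {{a, z}, {z, b}} \<union> {{a, b}})"
    unfolding E0 using zK by (intro Un_Diff_Un_if_disjoint) auto
  also have "\<dots> = (K - {e}) \<union> ({{q1, q2}} \<union> ({{p, u}, {q, u}} \<union> {{u, c}, {c, x}, {c, y}}))"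
    using ab o p distinct z_in_S
    by (elim disjE) (simp_all add: insert_Diff_if doubleton_eq_iff insert_commute neq)
  also have "\<dots> = attach_cherry_E H e u c x y"
  proof -
    have "H - {e} = (K - {e}) \<union> {{q1, q2}}" using eK q1q2_notin K_subset_E unfolding H_def by auto
    then show ?thesis unfolding attach_cherry_E_def by (simp only: pq(1) Setcompr_pair Un_assoc)
  qed
  finally show "(pruned (attach_cherry_E E e u c x y) - {{a, z}, {z, b}}) \<union> {{a, b}} =
       attach_cherry_E H e u c x y" .
  show "attachable W H e u c x y"
    unfolding attachable_def using graph_on_H eK o unfolding H_def W_def by auto
  show "attach_cherry_V V u c x y - {v, w, z'} - {z} = attach_cherry_V W u c x y"
    unfolding attach_cherry_V_eq W_def S_def using o distinct by (auto simp: neq)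
qed

lemma cherry_reduction2_attach:
  assumes ok: "attachable V E e u c x y" and e: "e \<noteq> {v, z'}" "e \<noteq> {w, z'}"
    and red: "cherry_reduction2 (attach_cherry_V V u c x y) (attach_cherry_E E e u c x y) v w V' E'"
  obtains d where "attachable W H (red_edge e) d c x y" "V' = attach_cherry_V W d c x y"
    "E' = attach_cherry_E H (red_edge e) d c x y"
proof -
  obtain a b where nb:
    "neighbors (pruned (attach_cherry_E E e u c x y)) (if z' \<in> e then u else z) = {a, b}"
    and V': "V' = attach_cherry_V V u c x y - {v, w, z'} - {if z' \<in> e then u else z}"
    and E': "E' = (pruned (attach_cherry_E E e u c x y) -
            {{a, if z' \<in> e then u else z}, {if z' \<in> e then u else z, b}}) \<union> {{a, b}}"
    using cherry_reduction2_unfold[OF ok e red] .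
  consider "e = {z', z}" | "e = {z, q1}" | "e = {z, q2}" | "e \<in> K"
    using attach_edge_cases[OF attachableD(2)[OF ok] e] by blast
  then show thesis
  proof cases
    case 1
    then have e: "z' \<in> e" "red_edge e = {q1, q2}" unfolding red_edge_def by auto
    then have "neighbors (pruned (attach_cherry_E E e u c x y)) u = {a, b}" using nb by simp
    from reduction_at_z'z[OF ok 1 this] show thesis using that[of z] e V' E' by simp
  next
    case 2
    then have e: "z' \<notin> e" "red_edge e = {q1, q2}" using distinct unfolding red_edge_def by auto
    then have "neighbors (pruned (attach_cherry_E E e u c x y)) z = {a, b}" using nb by simp
    from reduction_at_zq[OF ok 2 _ this, of q2] show thesis using that[of u] e V' E' by simp
  next
    case 3
    then have e: "z' \<notin> e" "red_edge e = {q1, q2}" using distinct unfolding red_edge_def by auto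
    then have "neighbors (pruned (attach_cherry_E E e u c x y)) z = {a, b}" using nb by simp
    from reduction_at_zq[OF ok 3 _ this, of q1] show thesis using that[of u] e V' E' by simp
  next
    case 4
    then have e: "z' \<notin> e" "red_edge e = e" using z_in_S unfolding red_edge_def K_def S_def by auto
    then have "neighbors (pruned (attach_cherry_E E e u c x y)) z = {a, b}" using nb by simp
    from reduction_at_K[OF ok 4 this] show thesis using that[of u] e V' E' by simp
  qed
qed

lemma labels_subset: "(X - {v, w}) \<union> {x, y} \<subseteq> W \<union> {x, y}"
proof -
  have "degree E z' = 3" "degree E z = 3"
    using neighbors_z' neighbors_z distinct degree_eq_card_neighbors[OF graph] by auto
  then have "z' \<notin> X" "z \<notin> X"
    using leaf_iff[rule_format, of z'] leaf_iff[rule_format, of z] by auto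
  then show ?thesis using X_subset unfolding W_def S_def by auto
qed

end

section \<open>Locating the cherry\<close>

lemma binary_phylo_tree_props:
  assumes "binary_phylo_tree X V E"
  shows "graph_on V E" "finite V" "acyclic_graph E" "\<forall>a\<in>V. \<forall>b\<in>V. b \<in> reach E a"
    "\<forall>t\<in>V. degree E t \<le> 1 \<longleftrightarrow> t \<in> X" "X \<subseteq> V"
    "\<forall>t\<in>V. degree E t \<noteq> 2" "\<forall>t\<in>V. degree E t \<le> 3"
  using assms
  unfolding binary_phylo_tree_def phylo_tree_def is_tree_def simple_graph_iff connected_graph_def
    reach_def adj_def leaves_def
  by auto

lemma acyclic_graph_no_triangle:
  assumes "acyclic_graph E" "{a, b} \<in> E" "{b, c} \<in> E" "{c, a} \<in> E" "distinct [a, b, c]"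
  shows False
proof -
  let ?cs = "[a, b, c]"
  have "\<forall>i < length ?cs. {?cs ! i, ?cs ! ((i + 1) mod length ?cs)} \<in> E"
  proof (intro allI impI)
    fix i assume "i < length ?cs"
    then have "i = 0 \<or> i = 1 \<or> i = 2" by auto
    then show "{?cs ! i, ?cs ! ((i + 1) mod length ?cs)} \<in> E" using assms(2-4) by auto
  qed
  moreover have "distinct ?cs" "length ?cs \<ge> 3" using assms(5) by auto
  ultimately show False using assms(1) unfolding acyclic_graph_def by meson
qed

lemma cherry_setting_exists:
  assumes T: "binary_phylo_tree X V E" and X4: "card X \<ge> 4"
    and vw: "v \<in> X" "w \<in> X" "v \<noteq> w"
    and z': "{v, z'} \<in> E" "{w, z'} \<in> E" and z: "{z', z} \<in> E" "z \<noteq> v" "z \<noteq> w"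
  obtains q1 q2 where "cherry_setting X V E v w z' z q1 q2"
proof -
  obtain graph: "graph_on V E" and finV: "finite V" and ac: "acyclic_graph E"
    and conn: "\<forall>a\<in>V. \<forall>b\<in>V. b \<in> reach E a"
    and leaf_iff: "\<forall>t\<in>V. degree E t \<le> 1 \<longleftrightarrow> t \<in> X" and XV: "X \<subseteq> V"
    and no_deg2: "\<forall>t\<in>V. degree E t \<noteq> 2" and deg3: "\<forall>t\<in>V. degree E t \<le> 3"
    using binary_phylo_tree_props[OF T] by blast
  have forest: "forest E" using acyclic_graph_imp_forest[OF graph ac] .
  have dg: "degree E t = card (neighbors E t)" for t by (rule degree_eq_card_neighbors[OF graph])
  have finN: "finite (neighbors E t)" for t
    using neighbors_subset[OF graph] finV by (rule finite_subset)
  note nbE = neighbors_iff[OF graph]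
  have inV: "v \<in> V" "w \<in> V" "z' \<in> V" "z \<in> V" and vz: "v \<noteq> z'" "w \<noteq> z'" "z' \<noteq> z"
    using graph_onD[OF graph z'(1)] graph_onD[OF graph z'(2)] graph_onD[OF graph z(1)] by simp_all
  have "card (neighbors E v) \<le> 1" "card (neighbors E w) \<le> 1" using leaf_iff vw inV dg by auto
  then have Nv: "neighbors E v = {z'}" and Nw: "neighbors E w = {z'}"
    using card_le_1_member_eq[OF finN] nbE z' by auto
  have Nz': "neighbors E z' = {v, w, z}"
  proof -
    have sub: "{v, w, z} \<subseteq> neighbors E z'" using nbE z' z by (auto simp: insert_commute)
    have "card {v, w, z} = 3" using vw z by simp
    moreover have "card (neighbors E z') \<le> 3" using deg3 inV dg by auto
    ultimately show ?thesis using card_seteq[OF finN sub] by simp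
  qed
  have z'X: "z' \<notin> X" using leaf_iff inV dg Nz' vw z by auto
  have zN: "z' \<in> neighbors E z" using nbE z by (simp add: insert_commute)
  text \<open>If z were a leaf, T would consist of v, w, z' and z only, contradicting |X| \<ge> 4.\<close>
  have "card (neighbors E z) = 3"
  proof (rule ccontr)
    assume "card (neighbors E z) \<noteq> 3"
    then have "card (neighbors E z) \<le> 1" using no_deg2 deg3 inV dg by fastforce
    then have Nz: "neighbors E z = {z'}" using card_le_1_member_eq[OF finN _ zN] by simp
    have "reach E v \<subseteq> {v, w, z', z}"
    proof
      fix p assume "p \<in> reach E v"
      then have "(v, p) \<in> (adj E)\<^sup>*" by (simp add: reach_def)
      then show "p \<in> {v, w, z', z}"
      proof induction
        case (step y q)
        then have "q \<in> neighbors E y" using nbE by simp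
        then show ?case using step.IH Nv Nw Nz' Nz by auto
      qed simp
    qed
    then have "X \<subseteq> {v, w, z}" using conn inV XV z'X by blast
    then have "card X \<le> card {v, w, z}" by (rule card_mono[rotated]) simp
    also have "\<dots> \<le> 3" by (simp add: card_insert_le_m1)
    finally show False using X4 by simp
  qed
  then have "card (neighbors E z - {z'}) = 2" using zN finN by (simp add: card_Diff_singleton)
  then obtain q1 q2 where q: "neighbors E z - {z'} = {q1, q2}" "q1 \<noteq> q2"
    by (auto simp: card_2_iff)
  have Nz: "neighbors E z = {z', q1, q2}" using q(1) zN by auto
  have qN: "{z, q1} \<in> E" "{z, q2} \<in> E" "q1 \<noteq> z'" "q2 \<noteq> z'" "q1 \<noteq> z" "q2 \<noteq> z"
    using q(1) nbE by (auto simp: neighbors_def)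
  have "z \<notin> neighbors E v" "z \<notin> neighbors E w" using Nv Nw vz by auto
  then have qv: "q1 \<noteq> v" "q1 \<noteq> w" "q2 \<noteq> v" "q2 \<noteq> w" using qN nbE by (auto simp: insert_commute)
  have q12: "{q1, q2} \<notin> E"
  proof
    assume "{q1, q2} \<in> E"
    then show False
      using acyclic_graph_no_triangle[OF ac _ qN(2), of q1] qN(1) q(2) qN(5,6)
      by (auto simp: insert_commute)
  qed
  have "cherry_setting X V E v w z' z q1 q2"
    by unfold_locales
      (use graph finV forest conn leaf_iff no_deg2 XV Nv Nw Nz' Nz vw z vz q(2) qN qv q12 in auto)
  then show thesis by (rule that)
qed

theorem lemma4:
  fixes X :: "'a set" and V :: "'a set" and E :: "'a set set"
    and v w z' z x y u1 c1 u2 c2 :: 'a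
    and e1 e2 :: "'a set"
    and V1 V2 :: "'a set" and E1 E2 :: "'a set set"
  assumes T: "binary_phylo_tree X V E"
    and X4: "card X \<ge> 4"
    and vw: "v \<in> X" "w \<in> X" "v \<noteq> w"
    and z': "{v, z'} \<in> E" "{w, z'} \<in> E"
    and z: "{z', z} \<in> E" "z \<noteq> v" "z \<noteq> w"
    and xy: "x \<notin> V" "y \<notin> V" "x \<noteq> y"
    and e1: "e1 \<in> E" "e1 \<noteq> {v, z'}" "e1 \<noteq> {w, z'}"
    and e2: "e2 \<in> E" "e2 \<noteq> {v, z'}" "e2 \<noteq> {w, z'}"
    and fresh1: "u1 \<notin> V \<union> {x, y}" "c1 \<notin> V \<union> {x, y}" "u1 \<noteq> c1"
    and fresh2: "u2 \<notin> V \<union> {x, y}" "c2 \<notin> V \<union> {x, y}" "u2 \<noteq> c2"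
    and red1: "cherry_reduction2 (attach_cherry_V V u1 c1 x y) (attach_cherry_E E e1 u1 c1 x y)
                 v w V1 E1"
    and red2: "cherry_reduction2 (attach_cherry_V V u2 c2 x y) (attach_cherry_E E e2 u2 c2 x y)
                 v w V2 E2"
  shows "tree_iso ((X - {v, w}) \<union> {x, y}) V1 E1 V2 E2 \<longleftrightarrow>
           (e1 = e2 \<or> (e1 \<in> {e\<in>E. z \<in> e} \<and> e2 \<in> {e\<in>E. z \<in> e}))"
proof -
  obtain q1 q2 where "cherry_setting X V E v w z' z q1 q2"
    using cherry_setting_exists[OF T X4 vw z' z] .
  then interpret cherry_setting X V E v w z' z q1 q2 .
  let ?L = "(X - {v, w}) \<union> {x, y}"
  have "attachable V E e1 u1 c1 x y" "attachable V E e2 u2 c2 x y"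
    using graph e1(1) e2(1) fresh1 fresh2 xy unfolding attachable_def by auto
  obtain d1 where D1: "attachable W H (red_edge e1) d1 c1 x y"
      "V1 = attach_cherry_V W d1 c1 x y" "E1 = attach_cherry_E H (red_edge e1) d1 c1 x y"
    using cherry_reduction2_attach[OF \<open>attachable V E e1 u1 c1 x y\<close> e1(2,3) red1] .
  obtain d2 where D2: "attachable W H (red_edge e2) d2 c2 x y"
      "V2 = attach_cherry_V W d2 c2 x y" "E2 = attach_cherry_E H (red_edge e2) d2 c2 x y"
    using cherry_reduction2_attach[OF \<open>attachable V E e2 u2 c2 x y\<close> e2(2,3) red2] .
  have "red_edge e1 = red_edge e2 \<longleftrightarrow> e1 = e2 \<or> (e1 \<in> {e\<in>E. z \<in> e} \<and> e2 \<in> {e\<in>E. z \<in> e})"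
    using q1q2_notin e1(1) e2(1) unfolding red_edge_def by auto
  moreover have "tree_iso ?L V1 E1 V2 E2 \<longleftrightarrow> red_edge e1 = red_edge e2"
  proof
    assume "tree_iso ?L V1 E1 V2 E2"
    then show "red_edge e1 = red_edge e2"
      using tree_iso_attach_imp_same_edge[OF D1(1) D2(1) finite_W forest_H no_deg2_H connected_H
          _ labels_subset] leaves_H D1(2,3) D2(2,3) by simp
  next
    assume "red_edge e1 = red_edge e2"
    then show "tree_iso ?L V1 E1 V2 E2"
      using tree_iso_attach_same_edge[OF D1(1) _ labels_subset] D1(2,3) D2 by simp
  qed
  ultimately show ?thesis by simp
qed

end
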